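(* Let $\alpha,p,j\ge0$ be integers, and let $b_n=2n+\alpha+1$, $\lambda_n=n(n+\alpha)$. Then $$\sum_{\omega\in\mathrm{Mot}_{p,j,j}}\mathrm{wt}_{b,\lambda}(\omega)=\big|M^{(\alpha)}_{p,j}(p)\big|.$$
   Context: Motzkin paths: a Motzkin path is a sequence $(s_0,\dots,s_n)$ of points $s_i=(x_i,y_i)\in\mathbb{Z}^2$ with all $y_i\ge0$ such that each step $(s_i,s_{i+1})$ is an East step ($s_{i+1}=s_i+(1,0)$), a North-East step ($s_{i+1}=s_i+(1,1)$) or a South-East step ($s_{i+1}=s_i+(1,-1)$); the step has height $k$ if $y_i=k$. $\mathrm{Mot}_{n,k,l}$ is the set of Motzkin paths from $(0,k)$ to $(n,l)$. Given sequences $(b_n)_{n\ge0},(\lambda_n)_{n\ge0}$, an East step of height $k$ has weight $b_k$, a North-East step weight $1$, a South-East step of height $k$ weight $\lambda_k$, and $\mathrm{wt}_{b,\lambda}(\omega)$ is the product of the step weights of $\omega$. Bipartite matchings: for integers $n,j,\alpha\ge0$, let $T_-=\{-\alpha-j,\dots,-1\}$, $T_+=\{1,\dots,n\}$ (top row), $B_-=\{-\tilde j,\dots,-\tilde 1\}$, $B_+=\{\tilde1,\dots,\tilde n\}$ (bottom row; $\tilde m$ is a formal copy of $m$). A bipartite matching on $T_-\cup T_+\cup B_-\cup B_+$ is a set partition into singletons (isolated vertices) and two-element blocks $\{a,\tilde b\}$ with $a$ in the top row and $\tilde b$ in the bottom row (edges). $M^{(\alpha)}_{n,j}$ is the set of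 such matchings having no edge $\{a,\tilde b\}$ with $a\in T_-$ and $\tilde b\in B_-$, and $M^{(\alpha)}_{n,j}(l)$ is its subset of matchings with exactly $l$ edges. *)

theory Defs
  imports Main
begin

definition motzkin_step :: "int \<times> int \<Rightarrow> int \<times> int \<Rightarrow> bool" where
  "motzkin_step s t \<longleftrightarrow>
     t = (fst s + 1, snd s) \<or> t = (fst s + 1, snd s + 1) \<or> t = (fst s + 1, snd s - 1)"

definition Mot :: "nat \<Rightarrow> nat \<Rightarrow> nat \<Rightarrow> (int \<times> int) list set" where
  "Mot n k l = {ss. length ss = n + 1 \<and> ss ! 0 = (0, int k) \<and> ss ! n = (int n, int l)
       \<and> (\<forall>i\<le>n. snd (ss ! i) \<ge> 0)
       \<and> (\<forall>i<n. motzkin_step (ss ! i) (ss ! Suc i))}"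

definition step_wt :: "(nat \<Rightarrow> 'a::comm_monoid_mult) \<Rightarrow> (nat \<Rightarrow> 'a) \<Rightarrow> int \<times> int \<Rightarrow> int \<times> int \<Rightarrow> 'a" where
  "step_wt b lam s t =
     (if snd t = snd s then b (nat (snd s))
      else if snd t = snd s + 1 then 1
      else lam (nat (snd s)))"

definition wt :: "(nat \<Rightarrow> 'a::comm_monoid_mult) \<Rightarrow> (nat \<Rightarrow> 'a) \<Rightarrow> (int \<times> int) list \<Rightarrow> 'a" where
  "wt b lam ss = (\<Prod>i<length ss - 1. step_wt b lam (ss ! i) (ss ! Suc i))"

(* Vertex sets. Top row: T_- = {-alpha-j..-1}, T_+ = {1..n};
   bottom row: B_- = {-j..-1}, B_+ = {1..n} (the tilde copies are encoded by
   the second component of an edge). *)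
definition top_row :: "nat \<Rightarrow> nat \<Rightarrow> nat \<Rightarrow> int set" where
  "top_row \<alpha> n j = {-(int \<alpha> + int j)..-1} \<union> {1..int n}"

definition bot_row :: "nat \<Rightarrow> nat \<Rightarrow> int set" where
  "bot_row n j = {-(int j)..-1} \<union> {1..int n}"

(* A bipartite matching (set partition into singletons and top-bottom pairs)
   is determined by its set of edges (a, b~), encoded as pairs (a,b);
   the remaining vertices are the singletons. *)
definition bip_matching :: "nat \<Rightarrow> nat \<Rightarrow> nat \<Rightarrow> (int \<times> int) set \<Rightarrow> bool" where
  "bip_matching \<alpha> n j E \<longleftrightarrow>
     E \<subseteq> top_row \<alpha> n j \<times> bot_row n j
     \<and> (\<forall>a b b'. (a, b) \<in> E \<longrightarrow> (a, b') \<in> E \<longrightarrow> b = b')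
     \<and> (\<forall>a a' b. (a, b) \<in> E \<longrightarrow> (a', b) \<in> E \<longrightarrow> a = a')"

definition Mset :: "nat \<Rightarrow> nat \<Rightarrow> nat \<Rightarrow> (int \<times> int) set set" where
  "Mset \<alpha> n j = {E. bip_matching \<alpha> n j E \<and> (\<forall>(a, b) \<in> E. \<not> (a < 0 \<and> b < 0))}"

definition Mset_l :: "nat \<Rightarrow> nat \<Rightarrow> nat \<Rightarrow> nat \<Rightarrow> (int \<times> int) set set" where
  "Mset_l \<alpha> n j l = {E \<in> Mset \<alpha> n j. card E = l}"

end

theory Submission
  imports Defs
begin

(* Read a matching column by column and record, after the first n columns, the number l of
   unmatched bottom vertices: it plays the role of the height of the path. All forbidden edges
   join two negative vertices, so the new top vertex n + 1 is adjacent to the whole bottom row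
   and then the new bottom vertex n + 1 to the whole top row; each is either left isolated or
   matched to one of the currently free vertices on the other side. Counting these choices, the
   number N_n(l) of matchings of the first n columns with l unmatched bottom vertices satisfies
     N_(n+1)(l) = N_n(l - 1) + (2 l + alpha + 1) N_n(l) + (l + 1)(l + 1 + alpha) N_n(l + 1),
   the transfer recursion of the weighted Motzkin paths, with the same initial values. For
   n = p the height l = j means exactly p edges. *)

definition partial_matchings :: "('a \<times> 'b) set \<Rightarrow> ('a \<times> 'b) set set" where
  "partial_matchings A = {E. E \<subseteq> A \<and> inj_on fst E \<and> inj_on snd E}"

lemma finite_partial_matchings: "finite A \<Longrightarrow> finite (partial_matchings A)"
  unfolding partial_matchings_def by (rule finite_subset[of _ "Pow A"]) auto

lemma card_partial_matching_le:
  assumes "E \<in> partial_matchings A" "snd ` A \<subseteq> Y" "finite Y"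
  shows "card E \<le> card Y"
proof -
  have "card E = card (snd ` E)"
    using assms(1) by (simp add: partial_matchings_def card_image)
  also have "\<dots> \<le> card Y"
    using assms by (intro card_mono) (auto simp: partial_matchings_def)
  finally show ?thesis .
qed

lemma partial_matchings_add_top_vertex:
  assumes "x \<notin> fst ` A"
  shows "partial_matchings (A \<union> {x} \<times> Y) =
    partial_matchings A \<union> (\<lambda>(F, y). insert (x, y) F) ` (SIGMA F:partial_matchings A. Y - snd ` F)"
    (is "?L = ?R")
proof
  show "?L \<subseteq> ?R"
  proof
    fix E assume E: "E \<in> ?L"
    show "E \<in> ?R"
    proof (cases "x \<in> fst ` E")
      case False
      then have "E \<subseteq> A" using E by (force simp: partial_matchings_def)
      then show ?thesis using E by (simp add: partial_matchings_def)
    next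
      case True
      then obtain y where xy: "(x, y) \<in> E" by force
      have edge_at_x: "e = (x, y)" if "e \<in> E" "fst e = x" for e
        using E xy that by (auto simp: partial_matchings_def inj_on_def)
      define F where "F = E - {(x, y)}"
      have "F \<in> partial_matchings A"
        using E edge_at_x by (fastforce simp: partial_matchings_def F_def intro: inj_on_subset)
      moreover have "y \<in> Y - snd ` F"
        using E xy assms by (force simp: partial_matchings_def inj_on_def F_def)
      moreover have "E = insert (x, y) F" using xy by (auto simp: F_def)
      ultimately show ?thesis by force
    qed
  qed
  show "?R \<subseteq> ?L"
    using assms by (force simp: partial_matchings_def)
qed

lemma card_partial_matchings_add_top_vertex:
  assumes "finite A" "finite Y" "x \<notin> fst ` A" "snd ` A \<subseteq> Y"
  shows "card {E \<in> partial_matchings (A \<union> {x} \<times> Y). card E + u = card Y} =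
         card {E \<in> partial_matchings A. card E + u = card Y}
         + Suc u * card {E \<in> partial_matchings A. card E + Suc u = card Y}"
proof -
  let ?add_edge = "\<lambda>(F, y). insert (x, y) F"
  let ?smaller = "{F \<in> partial_matchings A. card F + Suc u = card Y}"
  let ?S = "SIGMA F:?smaller. Y - snd ` F"
  have fresh: "(x, y) \<notin> F" if "F \<in> partial_matchings A" for F y
    using that assms(3) by (force simp: partial_matchings_def)
  have finite_F: "finite F" if "F \<in> partial_matchings A" for F
    using that assms(1) by (auto simp: partial_matchings_def intro: finite_subset)
  have split: "{E \<in> partial_matchings (A \<union> {x} \<times> Y). card E + u = card Y} =
      {E \<in> partial_matchings A. card E + u = card Y} \<union> ?add_edge ` ?S"
  proof -
    have "card (insert (x, y) F) = Suc (card F)" if "F \<in> partial_matchings A" for F y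
      using fresh finite_F that by simp
    then show ?thesis
      unfolding partial_matchings_add_top_vertex[OF assms(3)] by fastforce
  qed
  have disjoint: "{E \<in> partial_matchings A. card E + u = card Y} \<inter> ?add_edge ` ?S = {}"
    using fresh by blast
  have "inj_on ?add_edge ?S"
    using fresh by (auto simp: inj_on_def insert_eq_iff)
  then have "card (?add_edge ` ?S) = (\<Sum>F\<in>?smaller. card (Y - snd ` F))"
    using finite_partial_matchings[OF assms(1)] assms(2) by (simp add: card_image card_SigmaI)
  also have "\<dots> = (\<Sum>F\<in>?smaller. Suc u)"
  proof (rule sum.cong[OF refl])
    fix F assume "F \<in> ?smaller"
    then have F: "F \<in> partial_matchings A" "card F + Suc u = card Y" by auto
    then have "card (snd ` F) = card F" "snd ` F \<subseteq> Y"
      using assms(4) by (auto simp: partial_matchings_def card_image)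
    then have "card (Y - snd ` F) = card Y - card F"
      using assms(2) by (simp add: card_Diff_subset finite_subset)
    then show "card (Y - snd ` F) = Suc u"
      using F(2) by simp
  qed
  finally have "card (?add_edge ` ?S) = Suc u * card ?smaller"
    by simp
  moreover have "finite (?add_edge ` ?S)"
    using finite_partial_matchings[OF assms(1)] assms(2) by auto
  ultimately show ?thesis
    unfolding split using disjoint finite_partial_matchings[OF assms(1)]
    by (simp add: card_Un_disjoint)
qed

lemma swap_image_partial_matching:
  assumes "E \<in> partial_matchings A"
  shows "prod.swap ` E \<in> partial_matchings (prod.swap ` A)"
proof -
  have "inj_on fst (prod.swap ` E)" "inj_on snd (prod.swap ` E)"
    using assms by (auto simp: partial_matchings_def comp_def intro!: inj_on_imageI)
  then show ?thesis
    using assms by (auto simp: partial_matchings_def)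
qed

lemma partial_matchings_swap:
  "partial_matchings (prod.swap ` A) = (`) prod.swap ` partial_matchings A"
proof
  show "(`) prod.swap ` partial_matchings A \<subseteq> partial_matchings (prod.swap ` A)"
    using swap_image_partial_matching by blast
  show "partial_matchings (prod.swap ` A) \<subseteq> (`) prod.swap ` partial_matchings A"
  proof
    fix E assume "E \<in> partial_matchings (prod.swap ` A)"
    then have "prod.swap ` E \<in> partial_matchings A"
      using swap_image_partial_matching[of E "prod.swap ` A"] by (simp add: image_image)
    moreover have "E = prod.swap ` prod.swap ` E"
      by (simp add: image_image)
    ultimately show "E \<in> (`) prod.swap ` partial_matchings A"
      by blast
  qed
qed

lemma card_partial_matchings_swap:
  "card {E \<in> partial_matchings (prod.swap ` A). P (card E)} =
   card {E \<in> partial_matchings A. P (card E)}"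
proof -
  have "{E \<in> partial_matchings (prod.swap ` A). P (card E)} =
        (`) prod.swap ` {E \<in> partial_matchings A. P (card E)}"
    unfolding partial_matchings_swap by (auto simp: card_image)
  moreover have "inj_on ((`) prod.swap) {E \<in> partial_matchings A. P (card E)}"
    by (rule inj_onI) (simp add: inj_image_eq_iff)
  ultimately show ?thesis
    by (simp add: card_image)
qed

lemma card_partial_matchings_add_bottom_vertex:
  assumes "finite A" "finite X" "y \<notin> snd ` A" "fst ` A \<subseteq> X"
  shows "card {E \<in> partial_matchings (A \<union> X \<times> {y}). card E + v = card X} =
         card {E \<in> partial_matchings A. card E + v = card X}
         + Suc v * card {E \<in> partial_matchings A. card E + Suc v = card X}"
proof -
  let ?B = "prod.swap ` A \<union> {y} \<times> X"
  have swap_B: "A \<union> X \<times> {y} = prod.swap ` ?B"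
    by (simp add: image_Un image_image product_swap)
  have "card {E \<in> partial_matchings (A \<union> X \<times> {y}). card E + v = card X} =
        card {E \<in> partial_matchings ?B. card E + v = card X}"
    unfolding swap_B by (rule card_partial_matchings_swap[where P = "\<lambda>c. c + v = card X"])
  also have "\<dots> = card {E \<in> partial_matchings (prod.swap ` A). card E + v = card X}
         + Suc v * card {E \<in> partial_matchings (prod.swap ` A). card E + Suc v = card X}"
    using assms by (intro card_partial_matchings_add_top_vertex) force+
  also have "\<dots> = card {E \<in> partial_matchings A. card E + v = card X}
         + Suc v * card {E \<in> partial_matchings A. card E + Suc v = card X}"
    by (simp only: card_partial_matchings_swap[where P = "\<lambda>c. c + v = card X"]
        card_partial_matchings_swap[where P = "\<lambda>c. c + Suc v = card X"])
  finally show ?thesis .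
qed

lemma motzkin_step_heights:
  "motzkin_step (int n, int l') (int (Suc n), int l) \<longleftrightarrow> l' = l \<or> Suc l' = l \<or> l' = Suc l"
  unfolding motzkin_step_def by auto

lemma Mot_0: "Mot 0 k l = (if l = k then {[(0, int k)]} else {})"
proof -
  have "ss \<in> Mot 0 k l \<longleftrightarrow> l = k \<and> ss = [(0, int k)]" for ss
    by (cases ss) (auto simp: Mot_def)
  then show ?thesis by auto
qed

lemma Mot_Suc:
  "Mot (Suc n) k l =
    (\<Union>l'\<in>{l'. l' = l \<or> Suc l' = l \<or> l' = Suc l}. (\<lambda>ys. ys @ [(int (Suc n), int l)]) ` Mot n k l')"
proof (intro set_eqI iffI)
  fix ss assume ss: "ss \<in> Mot (Suc n) k l"
  then have len: "length ss = Suc (Suc n)" and last: "ss ! Suc n = (int (Suc n), int l)"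
    and step: "motzkin_step (ss ! n) (ss ! Suc n)" and height: "snd (ss ! n) \<ge> 0"
    by (auto simp: Mot_def)
  define l' where "l' = nat (snd (ss ! n))"
  have end_ys: "ss ! n = (int n, int l')"
    using step last height by (cases "ss ! n") (auto simp: motzkin_step_def l'_def)
  have "ss = butlast ss @ [(int (Suc n), int l)]"
    using len last by (metis append_butlast_last_id diff_Suc_1 last_conv_nth list.size(3) nat.distinct(1))
  moreover have "butlast ss \<in> Mot n k l'"
    using ss len end_ys by (auto simp: Mot_def nth_butlast)
  moreover have "l' = l \<or> Suc l' = l \<or> l' = Suc l"
    using step end_ys last motzkin_step_heights by simp
  ultimately show "ss \<in> (\<Union>l'\<in>{l'. l' = l \<or> Suc l' = l \<or> l' = Suc l}.
      (\<lambda>ys. ys @ [(int (Suc n), int l)]) ` Mot n k l')"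
    by (intro UN_I[of l'] image_eqI[of ss _ "butlast ss"]) simp_all
next
  fix ss assume "ss \<in> (\<Union>l'\<in>{l'. l' = l \<or> Suc l' = l \<or> l' = Suc l}.
      (\<lambda>ys. ys @ [(int (Suc n), int l)]) ` Mot n k l')"
  then obtain l' ys where l': "l' = l \<or> Suc l' = l \<or> l' = Suc l" and ys: "ys \<in> Mot n k l'"
    and ss: "ss = ys @ [(int (Suc n), int l)]"
    by auto
  have "motzkin_step (ys ! n) (int (Suc n), int l)"
    using ys l' motzkin_step_heights by (simp add: Mot_def)
  then show "ss \<in> Mot (Suc n) k l"
    using ys unfolding ss by (auto simp: Mot_def nth_append less_Suc_eq le_Suc_eq)
qed

lemma finite_Mot: "finite (Mot n k l)"
proof (induction n arbitrary: l)
  case 0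
  then show ?case by (simp add: Mot_0)
next
  case (Suc n)
  have "finite {l'. l' = l \<or> Suc l' = l \<or> l' = Suc l}"
    by (rule finite_subset[of _ "{..Suc l}"]) auto
  then show ?case
    using Suc by (simp add: Mot_Suc)
qed

lemma wt_snoc:
  assumes "length ys = Suc n"
  shows "wt b lam (ys @ [q]) = wt b lam ys * step_wt b lam (ys ! n) q"
proof -
  have "wt b lam (ys @ [q]) = (\<Prod>i<Suc n. step_wt b lam ((ys @ [q]) ! i) ((ys @ [q]) ! Suc i))"
    using assms by (simp add: wt_def)
  also have "\<dots> = wt b lam ys * step_wt b lam (ys ! n) q"
    using assms by (simp add: wt_def nth_append)
  finally show ?thesis .
qed

definition motzkin_sum :: "(nat \<Rightarrow> 'a::comm_semiring_1) \<Rightarrow> (nat \<Rightarrow> 'a) \<Rightarrow> nat \<Rightarrow> nat \<Rightarrow> nat \<Rightarrow> 'a" where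
  "motzkin_sum b lam n k l = (\<Sum>\<omega>\<in>Mot n k l. wt b lam \<omega>)"

lemma motzkin_sum_0: "motzkin_sum b lam 0 k l = (if l = k then 1 else 0)"
  by (simp add: motzkin_sum_def Mot_0 wt_def)

lemma motzkin_sum_Suc_last_step:
  "motzkin_sum b lam (Suc n) k l =
    (\<Sum>l'\<in>{l'. l' = l \<or> Suc l' = l \<or> l' = Suc l}.
       motzkin_sum b lam n k l' * step_wt b lam (int n, int l') (int (Suc n), int l))"
proof -
  let ?q = "(int (Suc n), int l)"
  let ?H = "{l'. l' = l \<or> Suc l' = l \<or> l' = Suc l}"
  have "finite ?H"
    by (rule finite_subset[of _ "{..Suc l}"]) auto
  moreover have end_height: "l1 = l2" if "ys \<in> Mot n k l1" "ys \<in> Mot n k l2" for ys l1 l2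
    using that by (auto simp: Mot_def)
  ultimately have "motzkin_sum b lam (Suc n) k l =
      (\<Sum>l'\<in>?H. \<Sum>ss\<in>(\<lambda>ys. ys @ [?q]) ` Mot n k l'. wt b lam ss)"
    unfolding motzkin_sum_def Mot_Suc
    by (intro sum.UNION_disjoint) (auto simp: finite_Mot dest: end_height)
  also have "\<dots> = (\<Sum>l'\<in>?H. \<Sum>ys\<in>Mot n k l'. wt b lam ys * step_wt b lam (int n, int l') ?q)"
  proof (rule sum.cong[OF refl])
    fix l'
    have "(\<Sum>ss\<in>(\<lambda>ys. ys @ [?q]) ` Mot n k l'. wt b lam ss) = (\<Sum>ys\<in>Mot n k l'. wt b lam (ys @ [?q]))"
      by (simp add: sum.reindex inj_on_def)
    also have "\<dots> = (\<Sum>ys\<in>Mot n k l'. wt b lam ys * step_wt b lam (int n, int l') ?q)"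
      by (intro sum.cong refl) (auto simp: Mot_def wt_snoc)
    finally show "(\<Sum>ss\<in>(\<lambda>ys. ys @ [?q]) ` Mot n k l'. wt b lam ss) =
        (\<Sum>ys\<in>Mot n k l'. wt b lam ys * step_wt b lam (int n, int l') ?q)" .
  qed
  finally show ?thesis
    by (simp add: motzkin_sum_def sum_distrib_right)
qed

lemma motzkin_sum_Suc:
  "motzkin_sum b lam (Suc n) k l =
     (if l = 0 then 0 else motzkin_sum b lam n k (l - 1))
     + b l * motzkin_sum b lam n k l + lam (Suc l) * motzkin_sum b lam n k (Suc l)"
proof (cases l)
  case 0
  then have "{l'. l' = l \<or> Suc l' = l \<or> l' = Suc l} = {0, 1}" by auto
  then show ?thesis
    using 0 by (simp add: motzkin_sum_Suc_last_step step_wt_def algebra_simps)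
next
  case (Suc m)
  then have "{l'. l' = l \<or> Suc l' = l \<or> l' = Suc l} = {m, Suc m, Suc (Suc m)}"
    and "nat (1 + int m) = Suc m" "nat (int m + 2) = Suc (Suc m)"
    by auto
  then show ?thesis
    using Suc by (simp add: motzkin_sum_Suc_last_step step_wt_def algebra_simps)
qed

definition allowed_edges :: "nat \<Rightarrow> nat \<Rightarrow> nat \<Rightarrow> (int \<times> int) set" where
  "allowed_edges \<alpha> n j = {(a, b) \<in> top_row \<alpha> n j \<times> bot_row n j. \<not> (a < 0 \<and> b < 0)}"

lemma bip_matching_iff:
  "bip_matching \<alpha> n j E \<and> (\<forall>(a, b) \<in> E. \<not> (a < 0 \<and> b < 0)) \<longleftrightarrow>
   E \<in> partial_matchings (allowed_edges \<alpha> n j)"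
proof -
  have "inj_on fst E \<longleftrightarrow> (\<forall>a b b'. (a, b) \<in> E \<longrightarrow> (a, b') \<in> E \<longrightarrow> b = b')"
    unfolding inj_on_def by fastforce
  moreover have "inj_on snd E \<longleftrightarrow> (\<forall>a a' b. (a, b) \<in> E \<longrightarrow> (a', b) \<in> E \<longrightarrow> a = a')"
    unfolding inj_on_def by fastforce
  moreover have "E \<subseteq> allowed_edges \<alpha> n j \<longleftrightarrow>
      E \<subseteq> top_row \<alpha> n j \<times> bot_row n j \<and> (\<forall>(a, b) \<in> E. \<not> (a < 0 \<and> b < 0))"
    unfolding allowed_edges_def by blast
  ultimately show ?thesis
    unfolding bip_matching_def partial_matchings_def by blast
qed

lemma Mset_l_eq_partial_matchings:
  "Mset_l \<alpha> n j e = {E \<in> partial_matchings (allowed_edges \<alpha> n j). card E = e}"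
  unfolding Mset_l_def Mset_def using bip_matching_iff by blast

lemma top_row_Suc: "top_row \<alpha> (Suc n) j = insert (int n + 1) (top_row \<alpha> n j)"
  unfolding top_row_def by auto

lemma bot_row_Suc: "bot_row (Suc n) j = insert (int n + 1) (bot_row n j)"
  unfolding bot_row_def by auto

lemma finite_top_row: "finite (top_row \<alpha> n j)"
  by (simp add: top_row_def)

lemma finite_bot_row: "finite (bot_row n j)"
  by (simp add: bot_row_def)

lemma card_top_row: "card (top_row \<alpha> n j) = \<alpha> + j + n"
  unfolding top_row_def by (subst card_Un_disjoint) auto

lemma card_bot_row: "card (bot_row n j) = j + n"
  unfolding bot_row_def by (subst card_Un_disjoint) auto

lemma allowed_edges_0: "allowed_edges \<alpha> 0 j = {}"
  by (auto simp: allowed_edges_def top_row_def bot_row_def)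

lemma allowed_edges_Suc:
  "allowed_edges \<alpha> (Suc n) j =
    (allowed_edges \<alpha> n j \<union> {int n + 1} \<times> bot_row n j) \<union> top_row \<alpha> (Suc n) j \<times> {int n + 1}"
  by (auto simp: allowed_edges_def top_row_Suc bot_row_Suc top_row_def bot_row_def)

(* j + n is the size of the bottom row, so l counts its unmatched vertices. *)
definition unmatched_bottom_count :: "nat \<Rightarrow> nat \<Rightarrow> nat \<Rightarrow> nat \<Rightarrow> nat" where
  "unmatched_bottom_count \<alpha> j n l =
     card {E \<in> partial_matchings (allowed_edges \<alpha> n j). card E + l = j + n}"

lemma unmatched_bottom_count_0: "unmatched_bottom_count \<alpha> j 0 l = (if l = j then 1 else 0)"
proof -
  have "{E \<in> partial_matchings ({} :: (int \<times> int) set). card E + l = j} =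
      (if l = j then {{}} else {})"
    by (auto simp: partial_matchings_def)
  then show ?thesis
    unfolding unmatched_bottom_count_def allowed_edges_0 by simp
qed

lemma unmatched_bottom_count_Suc:
  "unmatched_bottom_count \<alpha> j (Suc n) l =
     (if l = 0 then 0 else unmatched_bottom_count \<alpha> j n (l - 1))
     + (2 * l + \<alpha> + 1) * unmatched_bottom_count \<alpha> j n l
     + Suc l * (Suc l + \<alpha>) * unmatched_bottom_count \<alpha> j n (Suc l)"
proof -
  let ?N = "unmatched_bottom_count \<alpha> j n"
  let ?A = "allowed_edges \<alpha> n j"
  let ?B = "?A \<union> {int n + 1} \<times> bot_row n j"
  let ?X = "top_row \<alpha> (Suc n) j"
  \<comment> \<open>M counts the intermediate matchings, after adding top vertex n + 1 only.\<close>
  define M where "M l = card {E \<in> partial_matchings ?B. card E + l = j + n}" for l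
  have finite_A: "finite ?A"
    by (rule finite_subset[of _ "top_row \<alpha> n j \<times> bot_row n j"])
      (auto simp: allowed_edges_def finite_top_row finite_bot_row)
  then have finite_B: "finite ?B"
    by (simp add: finite_bot_row)
  have fresh_top: "int n + 1 \<notin> fst ` ?A"
    by (force simp: allowed_edges_def top_row_def)
  have fresh_bot: "int n + 1 \<notin> snd ` ?B"
    by (force simp: allowed_edges_def bot_row_def)
  have bot_A: "snd ` ?A \<subseteq> bot_row n j" and bot_B: "snd ` ?B \<subseteq> bot_row n j"
    and top_B: "fst ` ?B \<subseteq> ?X"
    by (auto simp: allowed_edges_def top_row_Suc)
  have M: "M l = ?N l + Suc l * ?N (Suc l)" for l
    using card_partial_matchings_add_top_vertex[OF finite_A finite_bot_row fresh_top bot_A, of l]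
    by (simp add: M_def unmatched_bottom_count_def card_bot_row)
  \<comment> \<open>The top row has \<alpha> more vertices, so l free bottom vertices mean \<alpha> + l free top ones.\<close>
  have "unmatched_bottom_count \<alpha> j (Suc n) l =
      card {E \<in> partial_matchings (?B \<union> ?X \<times> {int n + 1}). card E + (\<alpha> + l) = card ?X}"
    by (simp add: unmatched_bottom_count_def allowed_edges_Suc card_top_row)
  also have "\<dots> = card {E \<in> partial_matchings ?B. card E + (\<alpha> + l) = card ?X}
      + Suc (\<alpha> + l) * card {E \<in> partial_matchings ?B. card E + Suc (\<alpha> + l) = card ?X}"
    by (rule card_partial_matchings_add_bottom_vertex[OF finite_B finite_top_row fresh_bot top_B])
  also have "card {E \<in> partial_matchings ?B. card E + (\<alpha> + l) = card ?X} =
      (if l = 0 then 0 else M (l - 1))"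
  proof (cases l)
    case 0
    have "card E \<le> j + n" if "E \<in> partial_matchings ?B" for E
      using card_partial_matching_le[OF that bot_B finite_bot_row] by (simp add: card_bot_row)
    then have none: "{E \<in> partial_matchings ?B. card E + (\<alpha> + l) = card ?X} = {}"
      using 0 by (fastforce simp: card_top_row)
    show ?thesis
      unfolding none using 0 by simp
  qed (simp add: M_def card_top_row)
  also have "card {E \<in> partial_matchings ?B. card E + Suc (\<alpha> + l) = card ?X} = M l"
    by (simp add: M_def card_top_row)
  finally show ?thesis
    by (cases l) (simp_all add: M algebra_simps)
qed

lemma motzkin_sum_eq_unmatched_bottom_count:
  "motzkin_sum (\<lambda>n. 2 * n + \<alpha> + 1) (\<lambda>n. n * (n + \<alpha>)) n j l = unmatched_bottom_count \<alpha> j n l"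
  by (induction n arbitrary: l)
    (simp_all add: motzkin_sum_0 unmatched_bottom_count_0 motzkin_sum_Suc unmatched_bottom_count_Suc)

theorem lemma2p2:
  fixes \<alpha> p j :: nat
  shows "(\<Sum>\<omega>\<in>Mot p j j. wt (\<lambda>n. 2 * n + \<alpha> + 1) (\<lambda>n. n * (n + \<alpha>)) \<omega>)
         = card (Mset_l \<alpha> p j p)"
proof -
  have "(\<Sum>\<omega>\<in>Mot p j j. wt (\<lambda>n. 2 * n + \<alpha> + 1) (\<lambda>n. n * (n + \<alpha>)) \<omega>) =
      motzkin_sum (\<lambda>n. 2 * n + \<alpha> + 1) (\<lambda>n. n * (n + \<alpha>)) p j j"
    unfolding motzkin_sum_def ..
  also have "\<dots> = unmatched_bottom_count \<alpha> j p j"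
    by (rule motzkin_sum_eq_unmatched_bottom_count)
  also have "\<dots> = card (Mset_l \<alpha> p j p)"
    by (simp add: unmatched_bottom_count_def Mset_l_eq_partial_matchings add.commute)
  finally show ?thesis .
qed

end
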